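(* Let $m>1$, $N\ge2$, $\chi>0$, $X_0\in\mathcal R^N$, and let $X$ be the maximal solution in $\mathcal R^N$ on $[0,T)$ of the gradient flow system with $X(0)=X_0$. Define $f_{m+1}(t)=\frac1{m+1}|X(t)|^{m+1}$. Then $f_{m+1}$ is concave on $[0,T)$, and for all $t\in[0,T)$, $$\frac{df_{m+1}}{dt}(t)=(m-1)\,\mathcal F^N_m(X(t))\,|X(t)|^{m-1},\qquad \frac{d^2f_{m+1}}{dt^2}(t)=-\frac{m-1}{m+1}\,f_{m+1}(t)^{-1}\,\mathcal H^N_{m+1}\Big(\frac{X(t)}{|X(t)|}\Big),$$ where for $Y\in\mathcal R^N$ with $|Y|=1$, $\mathcal H^N_{m+1}(Y)=|\nabla\mathcal F^N_m(Y)|^2-\big((m-1)\mathcal F^N_m(Y)\big)^2\ge0$.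
   Context: $\mathcal R^N=\{X\in\mathbb R^N: X_1<\dots<X_N,\ \sum_iX_i=0\}$; $|\cdot|$ is the Euclidean norm and $\nabla$ the Euclidean gradient on $\mathbb R^N$. $\mathcal F^N_m(X)=\frac1{m-1}\sum_{i=1}^{N-1}(X_{i+1}-X_i)^{1-m}-\frac{\chi}{m-1}\sum_{1\le i\ne j\le N}|X_i-X_j|^{1-m}$. Gradient flow system: for $i=1,\dots,N$, $\dot X_i=-(X_{i+1}-X_i)^{-m}+(X_i-X_{i-1})^{-m}+2\chi\sum_{j\ne i}\mathrm{sign}(j-i)|X_j-X_i|^{-m}$, the first term absent for $i=N$ and the second for $i=1$ (i.e. $\dot X=-\nabla\mathcal F^N_m(X)$). *)

theory Defs
  imports "HOL-Analysis.Analysis" "HOL-Library.Extended_Real"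
begin

text \<open>Points of R^N are represented as functions nat => real; only the
components with indices 1..N are meaningful.\<close>

definition inRN :: "nat \<Rightarrow> (nat \<Rightarrow> real) \<Rightarrow> bool" where
  "inRN N X \<longleftrightarrow> (\<forall>i\<in>{1..<N}. X i < X (Suc i)) \<and> (\<Sum>i=1..N. X i) = 0"

definition enorm :: "nat \<Rightarrow> (nat \<Rightarrow> real) \<Rightarrow> real" where
  "enorm N X = sqrt (\<Sum>i=1..N. (X i)\<^sup>2)"

definition FmN :: "real \<Rightarrow> real \<Rightarrow> nat \<Rightarrow> (nat \<Rightarrow> real) \<Rightarrow> real" where
  "FmN m chi N X =
     1 / (m - 1) * (\<Sum>i=1..<N. (X (Suc i) - X i) powr (1 - m))
   - chi / (m - 1) * (\<Sum>i\<in>{1..N}. \<Sum>j\<in>{1..N} - {i}. \<bar>X i - X j\<bar> powr (1 - m))"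

definition gradF :: "real \<Rightarrow> real \<Rightarrow> nat \<Rightarrow> (nat \<Rightarrow> real) \<Rightarrow> nat \<Rightarrow> real" where
  "gradF m chi N X i = deriv (\<lambda>s. FmN m chi N (X(i := s))) (X i)"

definition HmN :: "real \<Rightarrow> real \<Rightarrow> nat \<Rightarrow> (nat \<Rightarrow> real) \<Rightarrow> real" where
  "HmN m chi N Y = (enorm N (gradF m chi N Y))\<^sup>2 - ((m - 1) * FmN m chi N Y)\<^sup>2"

definition flow_rhs :: "real \<Rightarrow> real \<Rightarrow> nat \<Rightarrow> (nat \<Rightarrow> real) \<Rightarrow> nat \<Rightarrow> real" where
  "flow_rhs m chi N X i =
     (if i < N then - ((X (Suc i) - X i) powr (- m)) else 0)
   + (if 1 < i then (X i - X (i - 1)) powr (- m) else 0)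
   + 2 * chi * (\<Sum>j\<in>{1..N} - {i}. sgn (real j - real i) * \<bar>X j - X i\<bar> powr (- m))"

definition is_solution ::
  "real \<Rightarrow> real \<Rightarrow> nat \<Rightarrow> (nat \<Rightarrow> real) \<Rightarrow> ereal \<Rightarrow> (real \<Rightarrow> nat \<Rightarrow> real) \<Rightarrow> bool" where
  "is_solution m chi N X0 T X \<longleftrightarrow>
     0 < T \<and> (\<forall>i\<in>{1..N}. X 0 i = X0 i) \<and>
     (\<forall>t. 0 \<le> t \<and> ereal t < T \<longrightarrow> inRN N (X t) \<and>
        (\<forall>i\<in>{1..N}. ((\<lambda>s. X s i) has_real_derivative flow_rhs m chi N (X t) i)
                        (at t within {s. 0 \<le> s \<and> ereal s < T})))"

definition is_maximal_solution ::
  "real \<Rightarrow> real \<Rightarrow> nat \<Rightarrow> (nat \<Rightarrow> real) \<Rightarrow> ereal \<Rightarrow> (real \<Rightarrow> nat \<Rightarrow> real) \<Rightarrow> bool" where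
  "is_maximal_solution m chi N X0 T X \<longleftrightarrow>
     is_solution m chi N X0 T X \<and>
     \<not> (\<exists>T' Y. T < T' \<and> is_solution m chi N X0 T' Y \<and>
          (\<forall>t. 0 \<le> t \<and> ereal t < T \<longrightarrow> (\<forall>i\<in>{1..N}. Y t i = X t i)))"

end

theory Submission
  imports Defs
begin

text \<open>Along the flow \<open>X' = -\<nabla>F\<close>, Euler's identity for the \<open>(1 - m)\<close>-homogeneous \<open>F\<close> gives
  \<open>d/dt |X|\<^sup>2/2 = -\<langle>X, \<nabla>F(X)\<rangle> = (m - 1) F(X)\<close>, while \<open>d/dt F(X) = -|\<nabla>F(X)|\<^sup>2\<close>. Hence
  \<open>f' = (m - 1) F(X) |X|\<^sup>m\<^sup>-\<^sup>1\<close> and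
  \<open>f'' = (m - 1) |X|\<^sup>m\<^sup>-\<^sup>3 (((m - 1) F(X))\<^sup>2 - |X|\<^sup>2 |\<nabla>F(X)|\<^sup>2)\<close>, which the homogeneity of
  \<open>F\<close> and \<open>\<nabla>F\<close> turns into the stated multiple of \<open>H(X/|X|)\<close>. Cauchy-Schwarz applied to
  \<open>\<langle>X, \<nabla>F(X)\<rangle> = -(m - 1) F(X)\<close> shows \<open>H \<ge> 0\<close>, so \<open>f'' \<le> 0\<close> and \<open>f\<close> is concave.\<close>

lemma has_real_derivative_abs:
  assumes "y \<noteq> (0::real)"
  shows "(abs has_real_derivative sgn y) (at y)"
proof -
  have "0 < y * y"
    using assms by (auto simp: zero_less_mult_iff linorder_neq_iff)
  then have "eventually (\<lambda>z. 0 < z * y) (nhds y)"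
    by (rule order_tendstoD(1)[OF tendsto_mult_right[OF filterlim_ident]])
  then have "eventually (\<lambda>z. sgn y * z = \<bar>z\<bar>) (nhds y)"
    by (rule eventually_mono) (auto simp: sgn_if zero_less_mult_iff)
  moreover have "((\<lambda>z. sgn y * z) has_real_derivative sgn y) (at y)"
    using DERIV_cmult_Id .
  ultimately show ?thesis
    using DERIV_cong_ev by blast
qed

lemma mean_value_within:
  fixes f f' :: "real \<Rightarrow> real"
  assumes "convex A" "a \<in> A" "b \<in> A" "a < b"
    and f': "\<And>x. x \<in> A \<Longrightarrow> (f has_real_derivative f' x) (at x within A)"
  shows "\<exists>\<xi>. a < \<xi> \<and> \<xi> < b \<and> f b - f a = (b - a) * f' \<xi>"
proof -
  have ab: "{a..b} \<subseteq> A"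
    by (rule atMostAtLeast_subset_convex) fact+
  have at_interior: "(f has_real_derivative f' x) (at x)" if "a < x" "x < b" for x
  proof -
    have "x \<in> interior A"
      using interior_mono[OF ab] that by auto
    moreover have "x \<in> A"
      using ab that by auto
    ultimately show ?thesis
      using f' at_within_interior by metis
  qed
  have "continuous_on {a..b} f"
    using continuous_on_subset[OF DERIV_continuous_on[OF f'] ab] .
  moreover have "f differentiable (at x)" if "a < x" "x < b" for x
    unfolding real_differentiable_def using at_interior[OF that] by blast
  ultimately obtain l \<xi> where \<xi>: "a < \<xi>" "\<xi> < b" "(f has_real_derivative l) (at \<xi>)" "f b - f a = (b - a) * l"
    using MVT[OF \<open>a < b\<close>] by blast
  moreover have "l = f' \<xi>"
    using DERIV_unique[OF \<xi>(3) at_interior[OF \<xi>(1,2)]] .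
  ultimately show ?thesis
    by blast
qed

lemma f''_le0_imp_concave_within:
  fixes f f' f'' :: "real \<Rightarrow> real"
  assumes "convex A"
    and f': "\<And>x. x \<in> A \<Longrightarrow> (f has_real_derivative f' x) (at x within A)"
    and f'': "\<And>x. x \<in> A \<Longrightarrow> (f' has_real_derivative f'' x) (at x within A)"
    and nonpos: "\<And>x. x \<in> A \<Longrightarrow> f'' x \<le> 0"
  shows "concave_on A f"
proof (rule concave_on_linorderI[OF _ \<open>convex A\<close>])
  have antitone: "f' y \<le> f' x" if xy: "x \<in> A" "y \<in> A" "x < y" for x y
  proof -
    obtain \<xi> where "x < \<xi>" "\<xi> < y" "f' y - f' x = (y - x) * f'' \<xi>"
      using mean_value_within[OF \<open>convex A\<close> xy f''] by blast
    moreover have "\<xi> \<in> A"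
      using atMostAtLeast_subset_convex[OF \<open>convex A\<close> xy] calculation by auto
    ultimately show ?thesis
      using mult_nonneg_nonpos[of "y - x" "f'' \<xi>"] nonpos[of \<xi>] xy(3) by simp
  qed
  fix t x y :: real
  assume t: "0 < t" "t < 1" and xy: "x \<in> A" "y \<in> A" "x < y"
  define z where "z = (1 - t) * x + t * y"
  have zx: "z - x = t * (y - x)" and yz: "y - z = (1 - t) * (y - x)"
    by (simp_all add: z_def algebra_simps)
  have "0 < t * (y - x)" "t * (y - x) < y - x"
    using t xy by simp_all
  then have "x < z" "z < y"
    unfolding z_def by (simp_all add: algebra_simps)
  have "z \<in> A"
    using atMostAtLeast_subset_convex[OF \<open>convex A\<close> xy] \<open>x < z\<close> \<open>z < y\<close> by auto
  obtain \<xi> where xi: "x < \<xi>" "\<xi> < z" "f z - f x = (z - x) * f' \<xi>"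
    using mean_value_within[OF \<open>convex A\<close> xy(1) \<open>z \<in> A\<close> \<open>x < z\<close> f'] by blast
  obtain \<eta> where eta: "z < \<eta>" "\<eta> < y" "f y - f z = (y - z) * f' \<eta>"
    using mean_value_within[OF \<open>convex A\<close> \<open>z \<in> A\<close> xy(2) \<open>z < y\<close> f'] by blast
  have "\<xi> \<in> A" "\<eta> \<in> A"
    using atMostAtLeast_subset_convex[OF \<open>convex A\<close> xy] xi eta \<open>x < z\<close> \<open>z < y\<close> by auto
  then have "f' \<eta> \<le> f' \<xi>"
    using xi(2) eta(1) by (intro antitone) auto
  then have "(y - z) * (z - x) * f' \<eta> \<le> (y - z) * (z - x) * f' \<xi>"
    using \<open>x < z\<close> \<open>z < y\<close> by (intro mult_left_mono) auto
  then have "(f y - f z) * (z - x) \<le> (f z - f x) * (y - z)"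
    unfolding xi(3) eta(3) by (simp only: mult_ac)
  then have "((f y - f z) * t) * (y - x) \<le> ((f z - f x) * (1 - t)) * (y - x)"
    by (simp only: zx yz mult.assoc mult.left_commute)
  then have "(f y - f z) * t \<le> (f z - f x) * (1 - t)"
    using xy(3) by simp
  then show "(1 - t) * f x + t * f y \<le> f ((1 - t) *\<^sub>R x + t *\<^sub>R y)"
    by (simp add: z_def algebra_simps)
qed

lemma inRN_strict_mono_on:
  assumes "inRN N X"
  shows "strict_mono_on {1..N} X"
proof (rule strict_mono_onI)
  fix i j assume "i \<in> {1..N}" "j \<in> {1..N}" "i < j"
  then have "{i..<j} \<subseteq> {1..<N}"
    by auto
  moreover have "X k < X (Suc k)" if "k \<in> {1..<N}" for k
    using assms that unfolding inRN_def by blast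
  ultimately show "X i < X j"
    using lift_Suc_mono_less_ivl[of "{1..<N}" X i j] \<open>i < j\<close> by blast
qed

lemma strict_mono_on_gap_pos:
  fixes X :: "nat \<Rightarrow> real"
  assumes "strict_mono_on {1..N} X" "i \<in> {1..<N}"
  shows "0 < X (Suc i) - X i"
  using strict_mono_onD[OF assms(1), of i "Suc i"] assms(2) by auto

lemma strict_mono_on_sgn_diff:
  fixes X :: "nat \<Rightarrow> real"
  assumes "strict_mono_on {1..N} X" "i \<in> {1..N}" "j \<in> {1..N}"
  shows "sgn (X i - X j) = sgn (real i - real j)"
  using strict_mono_onD[OF assms(1) assms(2,3)] strict_mono_onD[OF assms(1) assms(3,2)]
  by (cases i j rule: linorder_cases) auto

lemma sgn_diff_commute: "sgn (b - a) = - sgn (a - b :: real)"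
  by (metis minus_diff_eq sgn_minus)

lemma strict_mono_on_scale:
  fixes X :: "'a::order \<Rightarrow> real"
  assumes "0 < c" "strict_mono_on A X"
  shows "strict_mono_on A (\<lambda>i. c * X i)"
  using assms by (auto simp: strict_mono_on_def)

lemma sum_mult_diff_Suc:
  fixes E V :: "nat \<Rightarrow> 'a::comm_ring"
  shows "(\<Sum>i=1..<N. E i * (V (Suc i) - V i))
       = (\<Sum>i=1..N. ((if 1 < i then E (i - 1) else 0) - (if i < N then E i else 0)) * V i)"
proof -
  have "(\<Sum>i=1..N. if 1 < i then E (i - 1) * V i else 0) = sum (\<lambda>i. E (i - 1) * V i) {i\<in>{1..N}. 1 < i}"
    by (rule sum.inter_filter[symmetric]) simp
  also have "{i\<in>{1..N}. 1 < i} = Suc ` {1..<N}"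
    by (auto simp: image_iff intro: bexI[of _ "_ - 1"])
  also have "sum (\<lambda>i. E (i - 1) * V i) (Suc ` {1..<N}) = (\<Sum>i=1..<N. E i * V (Suc i))"
    by (subst sum.reindex) auto
  finally have shifted: "(\<Sum>i=1..N. if 1 < i then E (i - 1) * V i else 0) = (\<Sum>i=1..<N. E i * V (Suc i))" .
  have "(\<Sum>i=1..N. if i < N then E i * V i else 0) = sum (\<lambda>i. E i * V i) {i\<in>{1..N}. i < N}"
    by (rule sum.inter_filter[symmetric]) simp
  also have "{i\<in>{1..N}. i < N} = {1..<N}"
    by auto
  finally have "(\<Sum>i=1..N. if i < N then E i * V i else 0) = (\<Sum>i=1..<N. E i * V i)" .
  moreover have "(\<Sum>i=1..N. ((if 1 < i then E (i - 1) else 0) - (if i < N then E i else 0)) * V i)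
      = (\<Sum>i=1..N. (if 1 < i then E (i - 1) * V i else 0) - (if i < N then E i * V i else 0))"
    by (rule sum.cong) (auto simp: left_diff_distrib)
  ultimately show ?thesis
    using shifted by (simp add: right_diff_distrib sum_subtractf)
qed

lemma sum_offdiag_antisym:
  fixes w :: "'a \<Rightarrow> 'a \<Rightarrow> real"
  assumes "finite A" and antisym: "\<And>a b. w b a = - w a b"
  shows "(\<Sum>a\<in>A. \<Sum>b\<in>A - {a}. w a b * (V a - V b)) = 2 * (\<Sum>a\<in>A. V a * (\<Sum>b\<in>A - {a}. w a b))"
proof -
  have diag: "w a a = 0" for a
    using antisym[of a a] by simp
  have "(\<Sum>a\<in>A. \<Sum>b\<in>A. w a b * V b) = (\<Sum>b\<in>A. \<Sum>a\<in>A. w a b * V b)"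
    by (rule sum.swap)
  also have "\<dots> = (\<Sum>b\<in>A. \<Sum>a\<in>A. - (w b a * V b))"
    by (intro sum.cong refl) (metis antisym mult_minus_left)
  also have "\<dots> = - (\<Sum>a\<in>A. \<Sum>b\<in>A. w a b * V a)"
    by (simp add: sum_negf)
  finally have swapped: "(\<Sum>a\<in>A. \<Sum>b\<in>A. w a b * V b) = - (\<Sum>a\<in>A. \<Sum>b\<in>A. w a b * V a)" .
  have "(\<Sum>a\<in>A. \<Sum>b\<in>A - {a}. w a b * (V a - V b)) = (\<Sum>a\<in>A. \<Sum>b\<in>A. w a b * V a - w a b * V b)"
    using \<open>finite A\<close> by (simp add: sum_diff1 diag right_diff_distrib)
  also have "\<dots> = 2 * (\<Sum>a\<in>A. \<Sum>b\<in>A. w a b * V a)"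
    by (simp add: sum_subtractf swapped)
  also have "\<dots> = 2 * (\<Sum>a\<in>A. V a * (\<Sum>b\<in>A - {a}. w a b))"
    using \<open>finite A\<close> by (simp add: sum_diff1 diag sum_distrib_left mult.commute)
  finally show ?thesis .
qed

text \<open>Directional derivative of \<^const>\<open>FmN\<close> at \<open>X\<close> along \<open>V\<close>, with the chain-rule factor
  \<open>(1 - m) / (m - 1) = -1\<close> already cancelled.\<close>

definition dFmN :: "real \<Rightarrow> real \<Rightarrow> nat \<Rightarrow> (nat \<Rightarrow> real) \<Rightarrow> (nat \<Rightarrow> real) \<Rightarrow> real" where
  "dFmN m chi N X V =
     - (\<Sum>i=1..<N. (X (Suc i) - X i) powr (- m) * (V (Suc i) - V i))
   + chi * (\<Sum>i\<in>{1..N}. \<Sum>j\<in>{1..N} - {i}. sgn (X i - X j) * \<bar>X i - X j\<bar> powr (- m) * (V i - V j))"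

lemma has_real_derivative_FmN:
  assumes "m \<noteq> 1" and mono: "strict_mono_on {1..N} (Z t)"
    and Z': "\<And>i. i \<in> {1..N} \<Longrightarrow> ((\<lambda>s. Z s i) has_real_derivative V i) (at t within S)"
  shows "((\<lambda>s. FmN m chi N (Z s)) has_real_derivative dFmN m chi N (Z t) V) (at t within S)"
proof -
  have gap: "((\<lambda>s. (Z s (Suc i) - Z s i) powr (1 - m)) has_real_derivative
      (1 - m) * ((Z t (Suc i) - Z t i) powr (- m) * (V (Suc i) - V i))) (at t within S)"
    if "i \<in> {1..<N}" for i
    using DERIV_chain2[OF has_real_derivative_powr[of _ "1 - m"] DERIV_diff[OF Z'[of "Suc i"] Z'[of i]]]
      strict_mono_on_gap_pos[OF mono that] that by (simp add: mult_ac)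
  have pair: "((\<lambda>s. \<bar>Z s i - Z s j\<bar> powr (1 - m)) has_real_derivative
      (1 - m) * (sgn (Z t i - Z t j) * \<bar>Z t i - Z t j\<bar> powr (- m) * (V i - V j))) (at t within S)"
    if "i \<in> {1..N}" "j \<in> {1..N} - {i}" for i j
  proof -
    have "Z t i - Z t j \<noteq> 0"
      using strict_mono_on_sgn_diff[OF mono, of i j] that by (auto simp: sgn_if split: if_splits)
    then show ?thesis
      using DERIV_chain2[OF has_real_derivative_powr[of _ "1 - m"]
          DERIV_chain2[OF has_real_derivative_abs DERIV_diff[OF Z'[of i] Z'[of j]]]] that
      by (simp add: mult_ac)
  qed
  have "((\<lambda>s. FmN m chi N (Z s)) has_real_derivative
      1 / (m - 1) * (\<Sum>i=1..<N. (1 - m) * ((Z t (Suc i) - Z t i) powr (- m) * (V (Suc i) - V i)))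
    - chi / (m - 1) * (\<Sum>i\<in>{1..N}. \<Sum>j\<in>{1..N} - {i}.
        (1 - m) * (sgn (Z t i - Z t j) * \<bar>Z t i - Z t j\<bar> powr (- m) * (V i - V j)))) (at t within S)"
    unfolding FmN_def by (intro DERIV_diff DERIV_cmult DERIV_sum gap pair)
  moreover have "1 / (m - 1) * ((1 - m) * A) - chi / (m - 1) * ((1 - m) * B) = - A + chi * B" for A B
    using \<open>m \<noteq> 1\<close> by (simp add: divide_simps) (simp add: algebra_simps)
  ultimately show ?thesis
    unfolding dFmN_def by (simp only: sum_distrib_left[symmetric])
qed

text \<open>The term \<open>X (Suc (i - 1))\<close> is just \<open>X i\<close>, written as the gap at index \<open>i - 1\<close>.\<close>

lemma flow_rhs_eq_pairwise:
  assumes mono: "strict_mono_on {1..N} X" and i: "i \<in> {1..N}"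
  shows "flow_rhs m chi N X i =
      (if 1 < i then (X (Suc (i - 1)) - X (i - 1)) powr (- m) else 0)
    - (if i < N then (X (Suc i) - X i) powr (- m) else 0)
    - 2 * chi * (\<Sum>j\<in>{1..N} - {i}. sgn (X i - X j) * \<bar>X i - X j\<bar> powr (- m))"
proof -
  have "sgn (real j - real i) * \<bar>X j - X i\<bar> powr (- m) = - (sgn (X i - X j) * \<bar>X i - X j\<bar> powr (- m))"
    if "j \<in> {1..N}" for j
    using strict_mono_on_sgn_diff[OF mono i that]
    by (simp add: abs_minus_commute sgn_diff_commute[of _ i] sgn_diff_commute[of _ "X i"])
  then show ?thesis
    unfolding flow_rhs_def using i by (simp add: sum_negf)
qed

lemma dFmN_eq_flow_rhs:
  assumes mono: "strict_mono_on {1..N} X"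
  shows "dFmN m chi N X V = - (\<Sum>i=1..N. flow_rhs m chi N X i * V i)"
proof -
  define E where "E i = (X (Suc i) - X i) powr (- m)" for i
  define w where "w i j = sgn (X i - X j) * \<bar>X i - X j\<bar> powr (- m)" for i j
  have w_antisym: "w j i = - w i j" for i j
    unfolding w_def by (simp add: abs_minus_commute sgn_diff_commute[of "X i"])
  have pairs: "(\<Sum>i\<in>{1..N}. \<Sum>j\<in>{1..N} - {i}. w i j * (V i - V j))
      = 2 * (\<Sum>i\<in>{1..N}. V i * (\<Sum>j\<in>{1..N} - {i}. w i j))"
    by (rule sum_offdiag_antisym[OF finite_atLeastAtMost w_antisym])
  have flow: "flow_rhs m chi N X i
      = (if 1 < i then E (i - 1) else 0) - (if i < N then E i else 0) - 2 * chi * (\<Sum>j\<in>{1..N} - {i}. w i j)"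
    if "i \<in> {1..N}" for i
    unfolding E_def w_def by (rule flow_rhs_eq_pairwise[OF mono that])
  have "flow_rhs m chi N X i * V i
      = ((if 1 < i then E (i - 1) else 0) - (if i < N then E i else 0)) * V i
        - 2 * chi * (V i * (\<Sum>j\<in>{1..N} - {i}. w i j))" if "i \<in> {1..N}" for i
    unfolding flow[OF that] by (simp only: left_diff_distrib right_diff_distrib mult_ac)
  then have "(\<Sum>i=1..N. flow_rhs m chi N X i * V i)
      = (\<Sum>i=1..N. ((if 1 < i then E (i - 1) else 0) - (if i < N then E i else 0)) * V i)
        - 2 * chi * (\<Sum>i=1..N. V i * (\<Sum>j\<in>{1..N} - {i}. w i j))"
    by (simp add: sum_subtractf sum_distrib_left)
  also have "\<dots> = (\<Sum>i=1..<N. E i * (V (Suc i) - V i))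
      - chi * (\<Sum>i\<in>{1..N}. \<Sum>j\<in>{1..N} - {i}. w i j * (V i - V j))"
    by (simp only: sum_mult_diff_Suc pairs mult.assoc)
  finally show ?thesis
    unfolding dFmN_def E_def w_def by simp
qed

lemma powr_minus_mult_self:
  fixes d :: real
  assumes "0 \<le> d"
  shows "d powr (- m) * d = d powr (1 - m)"
  using assms powr_add[of d "- m" 1] by (cases "d = 0") auto

lemma dFmN_self:
  assumes "m \<noteq> 1" and mono: "strict_mono_on {1..N} X"
  shows "dFmN m chi N X X = (1 - m) * FmN m chi N X"
proof -
  have "(\<Sum>i=1..<N. (X (Suc i) - X i) powr (- m) * (X (Suc i) - X i)) = (\<Sum>i=1..<N. (X (Suc i) - X i) powr (1 - m))"
    using strict_mono_on_gap_pos[OF mono] by (intro sum.cong refl powr_minus_mult_self) (simp add: less_imp_le)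
  moreover have "sgn u * \<bar>u\<bar> powr (- m) * u = \<bar>u\<bar> powr (1 - m)" for u :: real
  proof -
    have "sgn u * u = \<bar>u\<bar>"
      by (simp add: sgn_if)
    then show ?thesis
      using powr_minus_mult_self[of "\<bar>u\<bar>" m] by (metis abs_ge_zero mult.commute mult.left_commute)
  qed
  moreover have "(1 - m) * (1 / (m - 1) * A - chi / (m - 1) * B) = - A + chi * B" for A B
    using \<open>m \<noteq> 1\<close> by (simp add: divide_simps) (simp add: algebra_simps)
  ultimately show ?thesis
    unfolding dFmN_def FmN_def by simp
qed

lemma sum_flow_rhs_mult_self:
  assumes "m \<noteq> 1" "strict_mono_on {1..N} X"
  shows "(\<Sum>i=1..N. flow_rhs m chi N X i * X i) = (m - 1) * FmN m chi N X"
  using dFmN_self[OF assms] dFmN_eq_flow_rhs[OF assms(2)] by (simp add: algebra_simps)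

lemma gradF_eq_flow_rhs:
  assumes "m \<noteq> 1" "strict_mono_on {1..N} X" "i \<in> {1..N}"
  shows "gradF m chi N X i = - flow_rhs m chi N X i"
proof -
  define V :: "nat \<Rightarrow> real" where "V j = (if j = i then 1 else 0)" for j
  have "((\<lambda>s. FmN m chi N (X(i := s))) has_real_derivative dFmN m chi N (X(i := X i)) V) (at (X i))"
    using assms(2) by (intro has_real_derivative_FmN[OF assms(1)]) (auto simp: V_def)
  moreover have "(\<Sum>j=1..N. flow_rhs m chi N X j * V j) = (\<Sum>j=1..N. if j = i then flow_rhs m chi N X j else 0)"
    by (rule sum.cong) (auto simp: V_def)
  then have "dFmN m chi N X V = - flow_rhs m chi N X i"
    using assms(3) by (simp add: dFmN_eq_flow_rhs[OF assms(2)] sum.delta')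
  ultimately show ?thesis
    unfolding gradF_def by (simp add: DERIV_imp_deriv)
qed

lemma FmN_scale:
  assumes "0 < c" and mono: "strict_mono_on {1..N} X"
  shows "FmN m chi N (\<lambda>i. c * X i) = c powr (1 - m) * FmN m chi N X"
proof -
  have "(c * X (Suc i) - c * X i) powr (1 - m) = c powr (1 - m) * (X (Suc i) - X i) powr (1 - m)"
    if "i \<in> {1..<N}" for i
    using strict_mono_on_gap_pos[OF mono that] \<open>0 < c\<close> by (simp add: right_diff_distrib[symmetric] powr_mult)
  then have gaps: "(\<Sum>i=1..<N. (c * X (Suc i) - c * X i) powr (1 - m))
      = c powr (1 - m) * (\<Sum>i=1..<N. (X (Suc i) - X i) powr (1 - m))"
    unfolding sum_distrib_left by (rule sum.cong[OF refl])
  have "\<bar>c * X i - c * X j\<bar> powr (1 - m) = c powr (1 - m) * \<bar>X i - X j\<bar> powr (1 - m)" for i j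
    using \<open>0 < c\<close> by (simp add: right_diff_distrib[symmetric] abs_mult powr_mult)
  then have pairs: "(\<Sum>i\<in>{1..N}. \<Sum>j\<in>{1..N} - {i}. \<bar>c * X i - c * X j\<bar> powr (1 - m))
      = c powr (1 - m) * (\<Sum>i\<in>{1..N}. \<Sum>j\<in>{1..N} - {i}. \<bar>X i - X j\<bar> powr (1 - m))"
    by (simp add: sum_distrib_left)
  show ?thesis
    unfolding FmN_def gaps pairs by (simp add: algebra_simps)
qed

lemma flow_rhs_scale:
  assumes "0 < c" and mono: "strict_mono_on {1..N} X" and i: "i \<in> {1..N}"
  shows "flow_rhs m chi N (\<lambda>i. c * X i) i = c powr (- m) * flow_rhs m chi N X i"
proof -
  have gap: "(c * X (Suc k) - c * X k) powr (- m) = c powr (- m) * (X (Suc k) - X k) powr (- m)"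
    if "k \<in> {1..<N}" for k
    using strict_mono_on_gap_pos[OF mono that] \<open>0 < c\<close> by (simp add: right_diff_distrib[symmetric] powr_mult)
  have "(c * X i - c * X (i - 1)) powr (- m) = c powr (- m) * (X i - X (i - 1)) powr (- m)" if "1 < i"
  proof -
    have "i - 1 \<in> {1..<N}" "Suc (i - 1) = i"
      using that i by auto
    then show ?thesis
      using gap[of "i - 1"] by simp
  qed
  moreover have "\<bar>c * X j - c * X i\<bar> powr (- m) = c powr (- m) * \<bar>X j - X i\<bar> powr (- m)" for j
    using \<open>0 < c\<close> by (simp add: right_diff_distrib[symmetric] abs_mult powr_mult)
  ultimately show ?thesis
    using gap[of i] i unfolding flow_rhs_def by (simp add: sum_distrib_left algebra_simps)
qed

lemma enorm_cong:
  assumes "\<And>i. i \<in> {1..N} \<Longrightarrow> X i = Y i"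
  shows "enorm N X = enorm N Y"
  unfolding enorm_def using assms by simp

lemma enorm_power2: "(enorm N X)\<^sup>2 = (\<Sum>i=1..N. (X i)\<^sup>2)"
  unfolding enorm_def by (simp add: sum_nonneg)

lemma enorm_scale: "enorm N (\<lambda>i. c * X i) = \<bar>c\<bar> * enorm N X"
  unfolding enorm_def by (simp add: power_mult_distrib sum_distrib_left[symmetric] real_sqrt_mult)

lemma enorm_pos:
  fixes X :: "nat \<Rightarrow> real"
  assumes "N \<ge> 2" "strict_mono_on {1..N} X"
  shows "0 < enorm N X"
proof -
  have "X 1 < X 2"
    using strict_mono_onD[OF assms(2), of 1 2] assms(1) by simp
  then have "0 < (\<Sum>i\<in>{1, 2}. (X i)\<^sup>2)"
    by (simp add: sum_power2_gt_zero_iff)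
  also have "\<dots> \<le> (\<Sum>i=1..N. (X i)\<^sup>2)"
    using assms(1) by (intro sum_mono2) auto
  finally show ?thesis
    unfolding enorm_def by simp
qed

lemma has_real_derivative_enorm:
  assumes pos: "0 < enorm N (Z t)"
    and Z': "\<And>i. i \<in> {1..N} \<Longrightarrow> ((\<lambda>s. Z s i) has_real_derivative V i) (at t within S)"
  shows "((\<lambda>s. enorm N (Z s)) has_real_derivative (\<Sum>i=1..N. Z t i * V i) / enorm N (Z t)) (at t within S)"
proof -
  have "((\<lambda>s. \<Sum>i=1..N. (Z s i)\<^sup>2) has_real_derivative (\<Sum>i=1..N. 2 * (Z t i * V i))) (at t within S)"
    using Z' by (intro DERIV_sum) (auto intro!: derivative_eq_intros)
  moreover have "0 < (\<Sum>i=1..N. (Z t i)\<^sup>2)"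
    using pos by (simp add: enorm_def)
  ultimately have "((\<lambda>s. enorm N (Z s)) has_real_derivative
      inverse (enorm N (Z t)) / 2 * (\<Sum>i=1..N. 2 * (Z t i * V i))) (at t within S)"
    unfolding enorm_def by (rule DERIV_chain2[OF DERIV_real_sqrt, rotated])
  moreover have "(\<Sum>i=1..N. 2 * (Z t i * V i)) = 2 * (\<Sum>i=1..N. Z t i * V i)"
    by (rule sum_distrib_left[symmetric])
  moreover have "inverse r / 2 * (2 * A) = A / r" for r A :: real
    by (simp add: field_simps)
  ultimately show ?thesis
    by (simp only:)
qed

lemma FmN_Cauchy_Schwarz:
  assumes "m \<noteq> 1" "strict_mono_on {1..N} X"
  shows "((m - 1) * FmN m chi N X)\<^sup>2 \<le> (enorm N X)\<^sup>2 * (enorm N (flow_rhs m chi N X))\<^sup>2"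
proof -
  have "(\<Sum>i=1..N. X i * flow_rhs m chi N X i) = (m - 1) * FmN m chi N X"
    using sum_flow_rhs_mult_self[OF assms] by (simp add: mult.commute)
  then show ?thesis
    using Cauchy_Schwarz_ineq_sum[of X "flow_rhs m chi N X" "{1..N}"] by (simp add: enorm_power2)
qed

lemma HmN_normalize:
  assumes "m > 1" and mono: "strict_mono_on {1..N} X" and pos: "0 < enorm N X"
  defines "e \<equiv> enorm N X"
  shows "HmN m chi N (\<lambda>i. X i / e)
    = (e powr (m - 1))\<^sup>2 * (e\<^sup>2 * (enorm N (flow_rhs m chi N X))\<^sup>2 - ((m - 1) * FmN m chi N X)\<^sup>2)"
proof -
  have e: "0 < e"
    using pos by (simp add: e_def)
  have Y: "(\<lambda>i. X i / e) = (\<lambda>i. inverse e * X i)"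
    by (simp add: divide_inverse mult.commute)
  have mono_Y: "strict_mono_on {1..N} (\<lambda>i. inverse e * X i)"
    using e mono by (intro strict_mono_on_scale) auto
  have "gradF m chi N (\<lambda>i. inverse e * X i) i = - (inverse e powr (- m)) * flow_rhs m chi N X i"
    if "i \<in> {1..N}" for i
    using gradF_eq_flow_rhs[OF _ mono_Y that] flow_rhs_scale[OF _ mono that] e assms(1) by simp
  then have "enorm N (gradF m chi N (\<lambda>i. inverse e * X i))
      = enorm N (\<lambda>i. - (inverse e powr (- m)) * flow_rhs m chi N X i)"
    by (rule enorm_cong)
  also have "\<dots> = inverse e powr (- m) * enorm N (flow_rhs m chi N X)"
    unfolding enorm_scale by simp
  also have "inverse e powr (- m) = e powr (m - 1) * e"
    using e powr_add[of e "m - 1" 1] by (simp add: inverse_powr powr_minus)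
  finally have grad: "enorm N (gradF m chi N (\<lambda>i. inverse e * X i)) = e powr (m - 1) * e * enorm N (flow_rhs m chi N X)" .
  have "inverse e powr (1 - m) = e powr (m - 1)"
    using e powr_minus[of e "1 - m"] by (simp add: inverse_powr)
  then have F: "FmN m chi N (\<lambda>i. inverse e * X i) = e powr (m - 1) * FmN m chi N X"
    using FmN_scale[OF _ mono, of "inverse e"] e by simp
  show ?thesis
    unfolding HmN_def Y grad F by (simp add: power2_eq_square algebra_simps)
qed

lemma HmN_normalize_nonneg:
  assumes "m > 1" "strict_mono_on {1..N} X" "0 < enorm N X"
  shows "0 \<le> HmN m chi N (\<lambda>i. X i / enorm N X)"
  using HmN_normalize[OF assms, of chi] FmN_Cauchy_Schwarz[of m N X chi] assms by simp

lemma HmN_nonneg: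
  assumes "m > 1" "strict_mono_on {1..N} Y" "enorm N Y = 1"
  shows "0 \<le> HmN m chi N Y"
  using HmN_normalize_nonneg[OF assms(1,2)] assms(3) by simp

abbreviation time_domain :: "ereal \<Rightarrow> real set" where
  "time_domain T \<equiv> {s. 0 \<le> s \<and> ereal s < T}"

lemma convex_time_domain: "convex (time_domain T)"
  unfolding is_interval_convex_1[symmetric] is_interval_1
  using le_less_trans[of "ereal _" "ereal _" T] by auto

context
  fixes m chi :: real and N :: nat and X0 :: "nat \<Rightarrow> real" and T :: ereal
    and X :: "real \<Rightarrow> nat \<Rightarrow> real"
  assumes m: "m > 1" and N: "N \<ge> 2" and sol: "is_solution m chi N X0 T X"
begin

lemma solution_strict_mono: "t \<in> time_domain T \<Longrightarrow> strict_mono_on {1..N} (X t)"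
  using sol inRN_strict_mono_on unfolding is_solution_def by blast

lemma solution_has_derivative:
  "t \<in> time_domain T \<Longrightarrow> i \<in> {1..N} \<Longrightarrow>
    ((\<lambda>s. X s i) has_real_derivative flow_rhs m chi N (X t) i) (at t within time_domain T)"
  using sol unfolding is_solution_def by blast

lemma solution_enorm_pos: "t \<in> time_domain T \<Longrightarrow> 0 < enorm N (X t)"
  using enorm_pos[OF N solution_strict_mono] .

lemma solution_enorm_deriv:
  assumes "t \<in> time_domain T"
  shows "((\<lambda>s. enorm N (X s)) has_real_derivative (m - 1) * FmN m chi N (X t) / enorm N (X t))
    (at t within time_domain T)"
  using has_real_derivative_enorm[OF solution_enorm_pos[OF assms] solution_has_derivative[OF assms]]
    sum_flow_rhs_mult_self[of m N "X t" chi] m solution_strict_mono[OF assms]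
  by (simp add: mult.commute)

lemma solution_FmN_deriv:
  assumes t: "t \<in> time_domain T"
  shows "((\<lambda>s. FmN m chi N (X s)) has_real_derivative - (enorm N (flow_rhs m chi N (X t)))\<^sup>2)
    (at t within time_domain T)"
proof (rule DERIV_cong)
  show "((\<lambda>s. FmN m chi N (X s)) has_real_derivative dFmN m chi N (X t) (flow_rhs m chi N (X t)))
      (at t within time_domain T)"
    using m by (intro has_real_derivative_FmN solution_strict_mono[OF t] solution_has_derivative[OF t]) auto
  show "dFmN m chi N (X t) (flow_rhs m chi N (X t)) = - (enorm N (flow_rhs m chi N (X t)))\<^sup>2"
    unfolding enorm_power2 by (simp add: dFmN_eq_flow_rhs[OF solution_strict_mono[OF t]] power2_eq_square)
qed

lemma solution_moment_deriv:
  assumes t: "t \<in> time_domain T"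
  shows "((\<lambda>s. 1 / (m + 1) * enorm N (X s) powr (m + 1)) has_real_derivative
      (m - 1) * FmN m chi N (X t) * enorm N (X t) powr (m - 1)) (at t within time_domain T)"
proof -
  define e where "e = enorm N (X t)"
  have e: "0 < e"
    using solution_enorm_pos[OF t] by (simp add: e_def)
  have D: "((\<lambda>s. 1 / (m + 1) * enorm N (X s) powr (m + 1)) has_real_derivative
      1 / (m + 1) * ((m + 1) * e powr (m + 1 - 1) * ((m - 1) * FmN m chi N (X t) / e))) (at t within time_domain T)"
    unfolding e_def
    by (rule DERIV_cmult[OF DERIV_chain2[OF has_real_derivative_powr[OF solution_enorm_pos[OF t]] solution_enorm_deriv[OF t]]])
  have "e powr (m + 1 - 1) = e powr (m - 1) * e"
    using e powr_add[of e "m - 1" 1] by simp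
  moreover have "1 / (m + 1) * ((m + 1) * (P * e) * (K / e)) = K * P" for P K
    using e m by (simp add: divide_simps)
  ultimately show ?thesis
    by (intro DERIV_cong[OF D]) (simp add: e_def[symmetric])
qed

lemma solution_moment_second_deriv:
  assumes t: "t \<in> time_domain T"
  shows "((\<lambda>s. (m - 1) * FmN m chi N (X s) * enorm N (X s) powr (m - 1)) has_real_derivative
      - ((m - 1) / (m + 1)) * inverse (1 / (m + 1) * enorm N (X t) powr (m + 1))
        * HmN m chi N (\<lambda>i. X t i / enorm N (X t))) (at t within time_domain T)"
proof -
  define e where "e = enorm N (X t)"
  define p where "p = e powr (m - 1)"
  define F where "F = FmN m chi N (X t)"
  define G where "G = enorm N (flow_rhs m chi N (X t))"
  have e: "0 < e" and p: "0 < p"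
    using solution_enorm_pos[OF t] by (simp_all add: e_def p_def)
  have D: "((\<lambda>s. (m - 1) * FmN m chi N (X s) * enorm N (X s) powr (m - 1)) has_real_derivative
      (m - 1) * F * ((m - 1) * e powr (m - 1 - 1) * ((m - 1) * F / e)) + (m - 1) * (- G\<^sup>2) * p)
      (at t within time_domain T)"
    unfolding e_def p_def F_def G_def
    by (rule DERIV_mult'[OF DERIV_cmult[OF solution_FmN_deriv[OF t]]
          DERIV_chain2[OF has_real_derivative_powr[OF solution_enorm_pos[OF t]] solution_enorm_deriv[OF t]]])
  have "e powr (m - 1 - 1) = p / e" "e powr (m + 1) = p * e\<^sup>2"
    using e powr_add[of e "m - 1 - 1" 1] powr_add[of e "m - 1" 2] by (simp_all add: p_def field_simps)
  moreover have "HmN m chi N (\<lambda>i. X t i / e) = p\<^sup>2 * (e\<^sup>2 * G\<^sup>2 - ((m - 1) * F)\<^sup>2)"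
    unfolding e_def p_def F_def G_def using HmN_normalize[OF m solution_strict_mono[OF t] solution_enorm_pos[OF t]] .
  moreover have "(m - 1) * F * ((m - 1) * (p / e) * ((m - 1) * F / e)) + (m - 1) * (- G\<^sup>2) * p
      = - ((m - 1) / (m + 1)) * inverse (1 / (m + 1) * (p * e\<^sup>2)) * (p\<^sup>2 * (e\<^sup>2 * G\<^sup>2 - ((m - 1) * F)\<^sup>2))"
    using e p m by (simp add: divide_simps inverse_eq_divide) (simp add: algebra_simps power2_eq_square)
  ultimately show ?thesis
    by (intro DERIV_cong[OF D]) (simp add: e_def[symmetric])
qed

lemma solution_moment_second_deriv_nonpos:
  assumes t: "t \<in> time_domain T"
  shows "- ((m - 1) / (m + 1)) * inverse (1 / (m + 1) * enorm N (X t) powr (m + 1))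
      * HmN m chi N (\<lambda>i. X t i / enorm N (X t)) \<le> 0"
  using HmN_normalize_nonneg[OF m solution_strict_mono[OF t] solution_enorm_pos[OF t], of chi]
    solution_enorm_pos[OF t] m
  by (intro mult_nonpos_nonneg) (auto simp: divide_nonneg_pos)

end

theorem proposition4p5:
  fixes m chi :: real and N :: nat and X0 :: "nat \<Rightarrow> real" and T :: ereal
    and X :: "real \<Rightarrow> nat \<Rightarrow> real" and f :: "real \<Rightarrow> real"
  assumes "m > 1" and "N \<ge> 2" and "chi > 0" and "inRN N X0"
    and "is_maximal_solution m chi N X0 T X"
    and "f = (\<lambda>t. 1 / (m + 1) * enorm N (X t) powr (m + 1))"
  shows "concave_on {t. 0 \<le> t \<and> ereal t < T} f
    \<and> (\<forall>t. 0 \<le> t \<and> ereal t < T \<longrightarrow>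
          (f has_real_derivative
             ((m - 1) * FmN m chi N (X t) * enorm N (X t) powr (m - 1)))
            (at t within {s. 0 \<le> s \<and> ereal s < T})
        \<and> ((\<lambda>s. (m - 1) * FmN m chi N (X s) * enorm N (X s) powr (m - 1)) has_real_derivative
             (- ((m - 1) / (m + 1)) * inverse (f t)
                * HmN m chi N (\<lambda>i. X t i / enorm N (X t))))
            (at t within {s. 0 \<le> s \<and> ereal s < T}))
    \<and> (\<forall>Y. inRN N Y \<and> enorm N Y = 1 \<longrightarrow> HmN m chi N Y \<ge> 0)"
proof -
  have sol: "is_solution m chi N X0 T X"
    using assms(5) unfolding is_maximal_solution_def by blast
  note f' = solution_moment_deriv[OF assms(1,2) sol]
    and f'' = solution_moment_second_deriv[OF assms(1,2) sol]
    and f''_nonpos = solution_moment_second_deriv_nonpos[OF assms(1,2) sol]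
  have "concave_on (time_domain T) f"
    unfolding assms(6) using convex_time_domain f' f'' f''_nonpos by (rule f''_le0_imp_concave_within)
  moreover have "\<forall>Y. inRN N Y \<and> enorm N Y = 1 \<longrightarrow> HmN m chi N Y \<ge> 0"
    using HmN_nonneg[OF assms(1)] inRN_strict_mono_on by blast
  ultimately show ?thesis
    using f' f'' unfolding assms(6) by simp
qed

end
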